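(* Let $S=\{\rho_1=0<\rho_2<\cdots\}$ be an Arf numerical semigroup with conductor $c=\rho_r$. If $j$ is a positive integer with $j<c+r$, then $\beta(\rho_j)\le r-1$ and $\#A[\rho_j]\le 2r-2<\#A[\rho_{c+r}]$.
   Context: A numerical semigroup is a submonoid $S$ of $(\mathbb{N}_0,+)$ with finite complement, with elements listed increasingly. $S$ is Arf if $\rho_i+\rho_j-\rho_k\in S$ for all positive integers $i\ge j\ge k$. The conductor $c$ is the smallest integer such that all integers $\ge c$ lie in $S$, with $c=\rho_r$. For $\rho\in S$: $A[\rho]=\{p\in S:\ \rho-p\in S\}$ and $\beta(\rho)=\max\{j\ge1:\ \rho_1,\dots,\rho_j\in A[\rho]\ \text{and}\ 2\rho_j\le\rho\}$. *)

theory Defs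
  imports Main "HOL-Library.Infinite_Set"
begin

definition numerical_semigroup :: "nat set \<Rightarrow> bool" where
  "numerical_semigroup S \<longleftrightarrow> 0 \<in> S \<and> (\<forall>a\<in>S. \<forall>b\<in>S. a + b \<in> S) \<and> finite (UNIV - S)"

text \<open>Elements of S listed increasingly, 1-indexed: rho S 1 = 0 < rho S 2 < ...\<close>
definition rho :: "nat set \<Rightarrow> nat \<Rightarrow> nat" where
  "rho S i = enumerate S (i - 1)"

definition conductor :: "nat set \<Rightarrow> nat" where
  "conductor S = (LEAST c. \<forall>n\<ge>c. n \<in> S)"

definition arf :: "nat set \<Rightarrow> bool" where
  "arf S \<longleftrightarrow> numerical_semigroup S \<and>
     (\<forall>i j k. 1 \<le> k \<and> k \<le> j \<and> j \<le> i \<longrightarrow> rho S i + rho S j - rho S k \<in> S)"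

definition Aset :: "nat set \<Rightarrow> nat \<Rightarrow> nat set" where
  "Aset S p = {q \<in> S. q \<le> p \<and> p - q \<in> S}"

definition beta :: "nat set \<Rightarrow> nat \<Rightarrow> nat" where
  "beta S p = Max {j. 1 \<le> j \<and> (\<forall>l\<in>{1..j}. rho S l \<in> Aset S p) \<and> 2 * rho S j \<le> p}"

end

theory Submission
  imports Defs
begin

text \<open>All integers from the conductor \<open>c = \<rho>\<^sub>r\<close> on lie in \<open>S\<close>, so \<open>\<rho>\<^sub>r\<^sub>+\<^sub>m = c + m\<close>, in particular
  \<open>\<rho>\<^sub>c\<^sub>+\<^sub>r = 2c\<close>, while the elements of \<open>S\<close> below \<open>c\<close> are exactly \<open>\<rho>\<^sub>1, \<dots>, \<rho>\<^sub>r\<^sub>-\<^sub>1\<close>.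
  If \<open>p < 2c\<close>, every \<open>q \<in> A[p]\<close> has \<open>q < c\<close> or \<open>p - q < c\<close>, so \<open>A[p]\<close> is covered by these
  \<open>r - 1\<close> small elements and their reflections \<open>p - q\<close>; and \<open>2\<rho>\<^sub>l \<le> p\<close> forces \<open>\<rho>\<^sub>l < c\<close>, i.e.
  \<open>l \<le> r - 1\<close>. For \<open>p = 2c\<close> the small elements, their reflections and \<open>c\<close> itself are
  \<open>2r - 1\<close> distinct elements of \<open>A[2c]\<close>.\<close>

definition small_elements :: "nat set \<Rightarrow> nat set" where
  "small_elements S = {q \<in> S. q < conductor S}"

lemma finite_small_elements: "finite (small_elements S)"
  by (rule finite_subset[of _ "{..<conductor S}"]) (auto simp: small_elements_def)

lemma finite_Aset: "finite (Aset S p)"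
  by (rule finite_subset[of _ "{..p}"]) (auto simp: Aset_def)

lemma numerical_semigroup_infinite:
  assumes "numerical_semigroup S"
  shows "infinite S"
proof
  assume "finite S"
  moreover have "finite (UNIV - S)"
    using assms by (simp add: numerical_semigroup_def)
  ultimately have "finite (S \<union> (UNIV - S))"
    by blast
  then show False
    by simp
qed

lemma mem_if_conductor_le:
  assumes "numerical_semigroup S" and "conductor S \<le> n"
  shows "n \<in> S"
proof -
  have "finite (UNIV - S)"
    using assms(1) by (simp add: numerical_semigroup_def)
  then obtain k where "UNIV - S \<subseteq> {..<k}"
    using finite_nat_bounded by blast
  then have "\<forall>n\<ge>k. n \<in> S"
    by auto
  then have "\<forall>n\<ge>conductor S. n \<in> S"
    unfolding conductor_def by (rule LeastI)
  with assms(2) show ?thesis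
    by blast
qed

lemma rho_in_set: "infinite S \<Longrightarrow> rho S i \<in> S"
  by (simp add: rho_def enumerate_in_set)

lemma rho_less_rho_iff:
  "infinite S \<Longrightarrow> 1 \<le> i \<Longrightarrow> 1 \<le> k \<Longrightarrow> rho S i < rho S k \<longleftrightarrow> i < k"
  by (auto simp: rho_def)

lemma rho_le_rho_iff:
  "infinite S \<Longrightarrow> 1 \<le> i \<Longrightarrow> 1 \<le> k \<Longrightarrow> rho S i \<le> rho S k \<longleftrightarrow> i \<le> k"
  by (auto simp: rho_def)

lemma ex_rho_eq:
  assumes "infinite S" and "s \<in> S"
  obtains i where "1 \<le> i" and "rho S i = s"
proof -
  obtain n where "enumerate S n = s"
    using enumerate_Ex[OF assms] by blast
  then have "rho S (Suc n) = s"
    by (simp add: rho_def)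
  then show ?thesis
    by (rule that[rotated]) simp
qed

lemma rho_one: "0 \<in> S \<Longrightarrow> rho S 1 = 0"
  by (simp add: rho_def enumerate_0)

lemma Aset_subset_small_elements:
  assumes "p < 2 * conductor S"
  shows "Aset S p \<subseteq> small_elements S \<union> (\<lambda>q. p - q) ` small_elements S"
proof
  fix q
  assume q: "q \<in> Aset S p"
  show "q \<in> small_elements S \<union> (\<lambda>q. p - q) ` small_elements S"
  proof (cases "q < conductor S")
    case True
    then show ?thesis
      using q by (simp add: Aset_def small_elements_def)
  next
    case False
    then have "p - q \<in> small_elements S"
      using q assms by (auto simp: Aset_def small_elements_def)
    moreover have "q = p - (p - q)"
      using q by (simp add: Aset_def)
    ultimately show ?thesis
      by blast
  qed
qed

lemma card_Aset_le:
  assumes "p < 2 * conductor S"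
  shows "card (Aset S p) \<le> 2 * card (small_elements S)"
proof -
  have "card (Aset S p) \<le> card (small_elements S \<union> (\<lambda>q. p - q) ` small_elements S)"
    using Aset_subset_small_elements[OF assms] finite_small_elements by (intro card_mono) auto
  also have "\<dots> \<le> card (small_elements S) + card ((\<lambda>q. p - q) ` small_elements S)"
    by (rule card_Un_le)
  also have "\<dots> \<le> 2 * card (small_elements S)"
    using card_image_le[OF finite_small_elements] by simp
  finally show ?thesis .
qed

lemma card_Aset_double_conductor:
  assumes "numerical_semigroup S"
  shows "2 * card (small_elements S) < card (Aset S (2 * conductor S))"
proof -
  let ?c = "conductor S" and ?L = "small_elements S"
  let ?R = "(\<lambda>q. 2 * ?c - q) ` ?L"
  have sub: "?L \<union> ?R \<union> {?c} \<subseteq> Aset S (2 * ?c)"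
    using mem_if_conductor_le[OF assms] by (auto simp: small_elements_def Aset_def)
  have "inj_on (\<lambda>q. 2 * ?c - q) ?L"
    by (rule inj_onI) (auto simp: small_elements_def)
  then have "card ?R = card ?L"
    by (rule card_image)
  moreover have "?L \<inter> ?R = {}" and "?c \<notin> ?L \<union> ?R"
    by (auto simp: small_elements_def)
  ultimately have "card (?L \<union> ?R \<union> {?c}) = card ?L + card ?L + 1"
    using finite_small_elements by (simp add: card_Un_disjoint)
  moreover have "card (?L \<union> ?R \<union> {?c}) \<le> card (Aset S (2 * ?c))"
    using sub finite_Aset by (rule card_mono[rotated])
  ultimately show ?thesis
    by simp
qed

context
  fixes S :: "nat set" and r :: nat
  assumes numerical: "numerical_semigroup S"
    and r_pos: "1 \<le> r" and rho_r: "rho S r = conductor S"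
begin

private lemma infinite: "infinite S"
  using numerical by (rule numerical_semigroup_infinite)

lemma rho_above_conductor: "rho S (r + m) = conductor S + m"
proof (induction m)
  case 0
  then show ?case
    using rho_r by simp
next
  case (Suc m)
  have "conductor S + Suc m \<in> S"
    using mem_if_conductor_le[OF numerical] by simp
  then obtain i where "1 \<le> i" and i: "rho S i = conductor S + Suc m"
    using infinite by (elim ex_rho_eq)
  have "r + m < i"
    using rho_less_rho_iff[OF infinite _ \<open>1 \<le> i\<close>, of "r + m"] r_pos Suc.IH i by simp
  then have "rho S (r + Suc m) \<le> conductor S + Suc m"
    using rho_le_rho_iff[OF infinite _ \<open>1 \<le> i\<close>, of "r + Suc m"] r_pos i by simp
  moreover have "conductor S + m < rho S (r + Suc m)"
    using rho_less_rho_iff[OF infinite, of "r + m" "r + Suc m"] r_pos Suc.IH by simp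
  ultimately show ?case
    by simp
qed

lemma rho_conductor_plus_index: "rho S (conductor S + r) = 2 * conductor S"
  using rho_above_conductor[of "conductor S"] by (simp add: add.commute)

lemma small_elements_eq: "small_elements S = rho S ` {1..<r}"
proof (intro equalityI subsetI)
  fix q
  assume "q \<in> small_elements S"
  then have "q \<in> S" and "q < rho S r"
    using rho_r by (auto simp: small_elements_def)
  obtain i where "1 \<le> i" and i: "rho S i = q"
    using infinite \<open>q \<in> S\<close> by (elim ex_rho_eq)
  have "i < r"
    using rho_less_rho_iff[OF infinite \<open>1 \<le> i\<close> r_pos] i \<open>q < rho S r\<close> by simp
  with \<open>1 \<le> i\<close> i show "q \<in> rho S ` {1..<r}"
    by auto
next
  fix q
  assume "q \<in> rho S ` {1..<r}"
  then obtain i where "1 \<le> i" "i < r" and i: "q = rho S i"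
    by auto
  then have "q < conductor S"
    using rho_less_rho_iff[OF infinite \<open>1 \<le> i\<close> r_pos] rho_r by simp
  then show "q \<in> small_elements S"
    using rho_in_set[OF infinite] i by (simp add: small_elements_def)
qed

lemma card_small_elements: "card (small_elements S) = r - 1"
proof -
  have "inj_on (rho S) {1..<r}"
  proof (rule inj_onI)
    fix a b
    assume "a \<in> {1..<r}" "b \<in> {1..<r}" "rho S a = rho S b"
    then show "a = b"
      using rho_le_rho_iff[OF infinite, of a b] rho_le_rho_iff[OF infinite, of b a] by simp
  qed
  then show ?thesis
    by (simp add: small_elements_eq card_image)
qed

lemma beta_le:
  assumes "p \<in> S" and "p < 2 * conductor S"
  shows "beta S p \<le> r - 1"
proof -
  define B where "B = {l. 1 \<le> l \<and> (\<forall>l'\<in>{1..l}. rho S l' \<in> Aset S p) \<and> 2 * rho S l \<le> p}"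
  have bound: "l \<le> r - 1" if "l \<in> B" for l
  proof -
    have "1 \<le> l" and "rho S l < rho S r"
      using that assms(2) rho_r by (auto simp: B_def)
    then show ?thesis
      using rho_less_rho_iff[OF infinite] r_pos by simp
  qed
  have "0 \<in> S"
    using numerical by (simp add: numerical_semigroup_def)
  then have "1 \<in> B"
    using assms(1) rho_one by (simp add: B_def Aset_def)
  moreover have "finite B"
    using bound by (intro finite_subset[of B "{..r - 1}"]) auto
  ultimately have "Max B \<le> r - 1"
    using bound by (subst Max_le_iff) auto
  then show ?thesis
    unfolding beta_def B_def .
qed

end

theorem mainTheorem8:
  fixes S :: "nat set" and r j :: nat
  assumes "arf S"
    and "1 \<le> r" and "rho S r = conductor S"
    and "1 \<le> j" and "j < conductor S + r"
  shows "beta S (rho S j) \<le> r - 1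
       \<and> card (Aset S (rho S j)) \<le> 2 * r - 2
       \<and> 2 * r - 2 < card (Aset S (rho S (conductor S + r)))"
proof -
  have numerical: "numerical_semigroup S"
    using assms(1) by (simp add: arf_def)
  note infinite = numerical_semigroup_infinite[OF numerical]
  have double: "rho S (conductor S + r) = 2 * conductor S"
    using numerical assms(2,3) by (rule rho_conductor_plus_index)
  have "rho S j < rho S (conductor S + r)"
    using rho_less_rho_iff[OF infinite assms(4)] assms(2,5) by simp
  then have small: "rho S j < 2 * conductor S"
    using double by simp
  have "card (small_elements S) = r - 1"
    using numerical assms(2,3) by (rule card_small_elements)
  then show ?thesis
    using beta_le[OF numerical assms(2,3) rho_in_set[OF infinite] small]
      card_Aset_le[OF small] card_Aset_double_conductor[OF numerical] double
    by (simp add: diff_mult_distrib2)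
qed

end
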